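(* Let $\mu_i\in\mathcal P(X_i)$, $i=1,\dots,N$, let $c:X\to[0,\infty)$ be measurable with $c\in L^1(\mu_1\otimes\cdots\otimes\mu_N)$, and let $\pi^*\in\Pi(\mu_1,\dots,\mu_N)$ be the optimizer of $S_{\rm ent}(\mu_1,\dots,\mu_N,c)$. Then $$D_{\rm KL}(\pi,\pi^* )\le\mathcal F(\pi)-\mathcal F(\pi^* )\quad\text{for all }\pi\in\Pi(\mu_1,\dots,\mu_N).$$
   Context: $X=\prod_iX_i$ for Polish spaces $X_i$; $\Pi(\mu_1,\dots,\mu_N)$ = couplings; $S_{\rm ent}(\mu_1,\dots,\mu_N,c)=\inf_{\pi\in\Pi(\mu_1,\dots,\mu_N)}\int c\,d\pi+D_{\rm KL}(\pi,\mu_1\otimes\cdots\otimes\mu_N)$. For a probability $\pi$ on $X$ with marginals $\pi_1,\dots,\pi_N$, $\mathcal F(\pi)=\int c\,d\pi+D_{\rm KL}(\pi,\pi_1\otimes\cdots\otimes\pi_N)$. *)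

theory Defs
  imports "HOL-Probability.Probability"
begin

definition Polish_space :: "'a topology \<Rightarrow> bool" where
  "Polish_space X \<longleftrightarrow> completely_metrizable_space X \<and> separable_space X"

definition borel_of :: "'a topology \<Rightarrow> 'a measure" where
  "borel_of X = sigma (topspace X) {U. openin X U}"

definition D_KL :: "'a measure \<Rightarrow> 'a measure \<Rightarrow> ereal" where
  "D_KL P Q =
    (if sets P = sets Q \<and> absolutely_continuous Q P then
       (let f = (\<lambda>x. enn2real (RN_deriv Q P x));
            g = (\<lambda>x. f x * ln (f x))
        in enn2ereal (\<integral>\<^sup>+ x. ennreal (g x) \<partial>Q) - enn2ereal (\<integral>\<^sup>+ x. ennreal (- g x) \<partial>Q))
     else \<infinity>)"

definition prod_space :: "nat \<Rightarrow> (nat \<Rightarrow> 'a topology) \<Rightarrow> (nat \<Rightarrow> 'a) measure" where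
  "prod_space N X = PiM {1..N} (\<lambda>i. borel_of (X i))"

definition marginal :: "(nat \<Rightarrow> 'a topology) \<Rightarrow> (nat \<Rightarrow> 'a) measure \<Rightarrow> nat \<Rightarrow> 'a measure" where
  "marginal X \<pi> i = distr \<pi> (borel_of (X i)) (\<lambda>x. x i)"

definition couplings :: "nat \<Rightarrow> (nat \<Rightarrow> 'a topology) \<Rightarrow> (nat \<Rightarrow> 'a measure) \<Rightarrow> (nat \<Rightarrow> 'a) measure set" where
  "couplings N X \<mu> = {\<pi>. prob_space \<pi> \<and> sets \<pi> = sets (prod_space N X) \<and>
                          (\<forall>i\<in>{1..N}. marginal X \<pi> i = \<mu> i)}"

definition F_ent :: "nat \<Rightarrow> (nat \<Rightarrow> 'a topology) \<Rightarrow> ((nat \<Rightarrow> 'a) \<Rightarrow> real) \<Rightarrow> (nat \<Rightarrow> 'a) measure \<Rightarrow> ereal" where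
  "F_ent N X c \<pi> = enn2ereal (\<integral>\<^sup>+ x. ennreal (c x) \<partial>\<pi>) + D_KL \<pi> (PiM {1..N} (marginal X \<pi>))"

definition S_ent :: "nat \<Rightarrow> (nat \<Rightarrow> 'a topology) \<Rightarrow> (nat \<Rightarrow> 'a measure) \<Rightarrow> ((nat \<Rightarrow> 'a) \<Rightarrow> real) \<Rightarrow> ereal" where
  "S_ent N X \<mu> c = (INF \<pi>\<in>couplings N X \<mu>.
      enn2ereal (\<integral>\<^sup>+ x. ennreal (c x) \<partial>\<pi>) + D_KL \<pi> (PiM {1..N} \<mu>))"

end

theory Submission
  imports Defs
begin

text \<open>Write \<open>P = \<mu>\<^sub>1 \<otimes> \<dots> \<otimes> \<mu>\<^sub>N\<close>, \<open>\<pi>\<^sup>* = h P\<close> and \<open>\<pi> = g P\<close>. On couplings,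
  \<open>\<F>(f P) = \<integral> (f c + \<psi>(f)) dP\<close> with \<open>\<psi>(x) = x ln x - x + 1\<close>. Along the segment
  \<open>f\<^sub>t = (1 - t) h + t g\<close>, which stays inside the convex set of couplings, the defect of convexity of
  \<open>\<psi>\<close> is exactly \<open>(1 - t) kl(h, f\<^sub>t) + t kl(g, f\<^sub>t)\<close> with \<open>kl(a, b) = a ln (a/b) - a + b\<close>,
  so minimality of \<open>\<pi>\<^sup>*\<close> gives \<open>\<integral> kl(g, f\<^sub>t) dP \<le> \<F>(\<pi>) - \<F>(\<pi>\<^sup>*)\<close>. Letting \<open>t \<rightarrow> 0\<close>,
  Fatou's lemma yields \<open>\<integral> kl(g, h) dP \<le> \<F>(\<pi>) - \<F>(\<pi>\<^sup>*)\<close>; in particular \<open>\<pi> \<ll> \<pi>\<^sup>*\<close>, and the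
  left-hand side is \<open>D\<^sub>K\<^sub>L(\<pi>, \<pi>\<^sup>*)\<close>.\<close>

definition kl_div :: "real \<Rightarrow> real \<Rightarrow> real" where
  "kl_div a b = a * ln (a / b) - a + b"

text \<open>The lower semicontinuous extension of \<open>kl_div\<close> to \<open>b = 0\<close>; \<open>kl_div a 0\<close> itself is the junk
  value \<open>-a\<close>, since \<open>ln 0 = 0\<close>.\<close>
definition kl_div_ennreal :: "real \<Rightarrow> real \<Rightarrow> ennreal" where
  "kl_div_ennreal a b = (if b = 0 \<and> 0 < a then \<top> else ennreal (kl_div a b))"

lemma kl_div_nonneg:
  assumes "0 \<le> a" "0 < b"
  shows "0 \<le> kl_div a b"
proof (cases "a = 0")
  case False
  with assms have "ln (b / a) \<le> b / a - 1" by (intro ln_le_minus_one) auto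
  hence "a * ln (b / a) \<le> a * (b / a - 1)" using assms by (intro mult_left_mono) auto
  also have "\<dots> = b - a" using False by (simp add: field_simps)
  finally show ?thesis using assms False by (simp add: kl_div_def ln_div algebra_simps)
qed (use assms in \<open>simp add: kl_div_def\<close>)

lemma kl_div_one_nonneg: "0 \<le> a \<Longrightarrow> 0 \<le> kl_div a 1"
  by (rule kl_div_nonneg) auto

lemma mult_ln_ge_minus_one: "0 \<le> (x::real) \<Longrightarrow> - 1 \<le> x * ln x"
  using kl_div_one_nonneg[of x] by (simp add: kl_div_def)

lemma kl_div_scale: "0 < h \<Longrightarrow> h * kl_div (g / h) 1 = kl_div g h"
  by (cases "g = 0") (auto simp: kl_div_def field_simps)

lemma mult_ln_div: "0 \<le> (a::real) \<Longrightarrow> 0 < m \<Longrightarrow> a * ln (a / m) = a * ln a - a * ln m"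
  by (cases "a = 0") (auto simp: ln_div algebra_simps)

lemma convex_comb_eq_0_iff:
  fixes a b t :: real
  assumes "0 \<le> a" "0 \<le> b" "0 < t" "t < 1"
  shows "(1 - t) * a + t * b = 0 \<longleftrightarrow> a = 0 \<and> b = 0"
proof -
  have "0 \<le> (1 - t) * a" "0 \<le> t * b" using assms by auto
  thus ?thesis using assms by (auto simp: add_nonneg_eq_0_iff)
qed

lemma kl_div_convex_comb_nonneg:
  fixes a b t :: real
  assumes "0 \<le> a" "0 \<le> b" "0 < t" "t < 1"
  shows "0 \<le> kl_div a ((1 - t) * a + t * b)"
proof (cases "(1 - t) * a + t * b = 0")
  case True
  thus ?thesis using assms by (simp add: convex_comb_eq_0_iff kl_div_def)
next
  case False
  hence "0 < (1 - t) * a + t * b" using assms by (smt (verit) mult_nonneg_nonneg)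
  thus ?thesis by (intro kl_div_nonneg assms(1))
qed

text \<open>Jensen's inequality for \<open>x \<mapsto> x ln x\<close> with an explicit remainder: the defect of convexity
  is the sum of the two divergences from the mixture.\<close>
lemma kl_div_convex_comb:
  fixes a b t :: real
  assumes a: "0 \<le> a" and b: "0 \<le> b" and t: "0 < t" "t < 1"
  defines "m \<equiv> (1 - t) * a + t * b"
  shows "(1 - t) * kl_div a 1 + t * kl_div b 1 = kl_div m 1 + (1 - t) * kl_div a m + t * kl_div b m"
proof (cases "m = 0")
  case True
  thus ?thesis using convex_comb_eq_0_iff[OF a b t] by (simp add: m_def kl_div_def)
next
  case False
  hence "0 < m" using a b t unfolding m_def by (smt (verit) mult_nonneg_nonneg)
  thus ?thesis unfolding kl_div_def mult_ln_div[OF a \<open>0 < m\<close>] mult_ln_div[OF b \<open>0 < m\<close>]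
    by (simp add: m_def algebra_simps)
qed

lemma tendsto_kl_div_convex_comb:
  fixes g h :: real and t :: "nat \<Rightarrow> real"
  assumes g: "0 \<le> g" and h: "0 \<le> h" and t: "t \<longlonglongrightarrow> 0" "\<And>n. 0 < t n"
  shows "(\<lambda>n. ennreal (kl_div g ((1 - t n) * h + t n * g))) \<longlonglongrightarrow> kl_div_ennreal g h"
proof (cases "h = 0 \<and> 0 < g")
  case True
  have "filterlim t (at_right 0) sequentially"
    using t by (intro tendsto_imp_filterlim_at_right) (auto intro: always_eventually)
  hence "filterlim (\<lambda>n. ln (t n)) at_bot sequentially"
    by (rule filterlim_compose[OF ln_at_0])
  hence ln: "filterlim (\<lambda>n. g * - ln (t n)) at_top sequentially"
    using True by (intro filterlim_tendsto_pos_mult_at_top[OF tendsto_const])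
      (auto simp: filterlim_uminus_at_top)
  have "(\<lambda>n. g * t n - g) \<longlonglongrightarrow> g * 0 - g"
    by (intro tendsto_intros t)
  hence "filterlim (\<lambda>n. (g * t n - g) + g * - ln (t n)) at_top sequentially"
    using ln by (rule filterlim_tendsto_add_at_top)
  moreover have "kl_div g ((1 - t n) * h + t n * g) = (g * t n - g) + g * - ln (t n)" for n
    using True t(2)[of n] by (simp add: kl_div_def ln_div algebra_simps)
  ultimately show ?thesis
    using True by (simp add: kl_div_ennreal_def ennreal_tendsto_top_eq_at_top)
next
  case False
  have m: "(\<lambda>n. (1 - t n) * h + t n * g) \<longlonglongrightarrow> (1 - 0) * h + 0 * g"
    by (intro tendsto_intros t)
  have "(\<lambda>n. kl_div g ((1 - t n) * h + t n * g)) \<longlonglongrightarrow> kl_div g h"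
  proof (cases "g = 0")
    case True
    thus ?thesis using m by (simp add: kl_div_def)
  next
    case False
    hence "0 < h" using \<open>\<not> (h = 0 \<and> 0 < g)\<close> g h by auto
    thus ?thesis unfolding kl_div_def using m False g by (auto intro!: tendsto_intros)
  qed
  thus ?thesis using False unfolding kl_div_ennreal_def by (simp only: if_False) (rule tendsto_ennrealI)
qed

lemma kl_div_measurable[measurable]:
  assumes [measurable]: "f \<in> borel_measurable M" "g \<in> borel_measurable M"
  shows "(\<lambda>x. kl_div (f x) (g x)) \<in> borel_measurable M"
  unfolding kl_div_def by measurable

lemma kl_div_ennreal_measurable[measurable]:
  assumes [measurable]: "f \<in> borel_measurable M" "g \<in> borel_measurable M"
  shows "(\<lambda>x. kl_div_ennreal (f x) (g x)) \<in> borel_measurable M"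
  unfolding kl_div_ennreal_def by measurable

lemma ennreal_mult_ln_parts:
  fixes x :: real
  assumes x: "0 \<le> x"
  shows "ennreal (x * ln x) + 1 = ennreal (kl_div x 1) + ennreal x + ennreal (- (x * ln x))"
proof -
  have k: "0 \<le> kl_div x 1" using kl_div_one_nonneg[OF x] .
  have sum: "kl_div x 1 + x = x * ln x + 1" by (simp add: kl_div_def)
  show ?thesis
  proof (cases "0 \<le> x * ln x")
    case True
    hence "ennreal (x * ln x) + 1 = ennreal (kl_div x 1 + x)" using sum by (simp add: ennreal_plus)
    thus ?thesis using True k x by (simp add: ennreal_neg ennreal_plus)
  next
    case False
    have "ennreal (kl_div x 1) + ennreal x + ennreal (- (x * ln x)) = ennreal (kl_div x 1 + x - x * ln x)"
      using k x False by (simp flip: ennreal_plus)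
    thus ?thesis using False sum by (simp add: ennreal_neg)
  qed
qed

lemma enn2ereal_add_diff_cancel: "b \<noteq> \<top> \<Longrightarrow> enn2ereal (a + b) - enn2ereal b = enn2ereal a"
proof -
  assume "b \<noteq> \<top>"
  hence "\<bar>enn2ereal b\<bar> \<noteq> \<infinity>" by (cases b) auto
  thus ?thesis by (simp add: plus_ennreal.rep_eq add.commute[of "enn2ereal a"] ereal_diff_add_inverse)
qed

lemma enn2ereal_minus: "b \<le> a \<Longrightarrow> enn2ereal (a - b) = enn2ereal a - enn2ereal b"
  by (simp add: minus_ennreal.rep_eq less_eq_ennreal.rep_eq ereal_diff_positive max_absorb2)

lemma ennreal_convex_comb_same: "0 \<le> t \<Longrightarrow> t \<le> 1 \<Longrightarrow> ennreal (1 - t) * a + ennreal t * a = a"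
  by (simp flip: distrib_right ennreal_plus)

text \<open>The optimality step: \<open>a\<close>, \<open>b\<close>, \<open>e\<close> are the costs of \<open>\<pi>\<^sup>*\<close>, \<open>\<pi>\<close> and of the mixture, which
  cannot beat \<open>\<pi>\<^sup>*\<close>.\<close>
lemma ennreal_convex_comb_cancel:
  fixes a b e d k :: ennreal and t :: real
  assumes a: "a \<noteq> \<top>" "a \<le> e" and t: "0 < t" "t < 1"
    and eq: "ennreal (1 - t) * a + ennreal t * b = e + ennreal (1 - t) * d + ennreal t * k"
  shows "k \<le> b - a"
proof -
  have "ennreal (1 - t) * a + ennreal t * (a + k) = (ennreal (1 - t) + ennreal t) * a + ennreal t * k"
    by (simp add: distrib_left distrib_right add.assoc)
  also have "ennreal (1 - t) + ennreal t = 1"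
    using t by (simp flip: ennreal_plus)
  also have "1 * a + ennreal t * k \<le> e + ennreal t * k"
    using a by (simp add: add_right_mono)
  also have "\<dots> \<le> e + ennreal (1 - t) * d + ennreal t * k"
    by (intro add_right_mono) simp
  finally have "ennreal (1 - t) * a + ennreal t * (a + k) \<le> ennreal (1 - t) * a + ennreal t * b"
    unfolding eq .
  hence "ennreal t * (a + k) \<le> ennreal t * b"
    using a by (subst (asm) ennreal_add_left_cancel_le) (simp add: ennreal_mult_eq_top_iff)
  hence "a + k \<le> b" using t by (subst (asm) ennreal_mult_le_mult_iff) auto
  thus ?thesis by (simp add: ennreal_le_minus_iff add.commute)
qed

lemma kl_div_convex_comb_cost:
  fixes a b c t :: real
  assumes a: "0 \<le> a" and b: "0 \<le> b" and c: "0 \<le> c" and t: "0 < t" "t < 1"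
  defines "m \<equiv> (1 - t) * a + t * b"
  shows "ennreal (1 - t) * ennreal (a * c + kl_div a 1) + ennreal t * ennreal (b * c + kl_div b 1) =
    ennreal (m * c + kl_div m 1) + ennreal (1 - t) * ennreal (kl_div a m) + ennreal t * ennreal (kl_div b m)"
proof -
  have m: "0 \<le> m" using a b t by (simp add: m_def)
  have ka: "0 \<le> kl_div a m" using kl_div_convex_comb_nonneg[OF a b t] by (simp add: m_def)
  have kb: "0 \<le> kl_div b m"
    using kl_div_convex_comb_nonneg[OF b a, of "1 - t"] t by (simp add: m_def add.commute)
  have "(1 - t) * (a * c + kl_div a 1) + t * (b * c + kl_div b 1) =
      (m * c + kl_div m 1) + (1 - t) * kl_div a m + t * kl_div b m"
    using kl_div_convex_comb[OF a b t] by (simp add: m_def algebra_simps)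
  hence "ennreal ((1 - t) * (a * c + kl_div a 1) + t * (b * c + kl_div b 1)) =
      ennreal ((m * c + kl_div m 1) + (1 - t) * kl_div a m + t * kl_div b m)"
    by simp
  thus ?thesis
    using a b c m t ka kb kl_div_one_nonneg[OF a] kl_div_one_nonneg[OF b] kl_div_one_nonneg[OF m]
    by (simp add: ennreal_plus ennreal_mult)
qed

lemma D_KL_not_absolutely_continuous: "\<not> absolutely_continuous Q \<nu> \<Longrightarrow> D_KL \<nu> Q = \<infinity>"
  unfolding D_KL_def by auto

lemma D_KL_density_eq:
  assumes Q: "prob_space Q" and [measurable]: "f \<in> borel_measurable Q" and f: "\<And>x. 0 \<le> f x"
    and \<nu>: "prob_space (density Q f)"
  shows "D_KL (density Q f) Q = enn2ereal (\<integral>\<^sup>+x. ennreal (kl_div (f x) 1) \<partial>Q)"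
proof -
  interpret Q: prob_space Q by fact
  let ?\<nu> = "density Q f"
  have "AE x in Q. ennreal (f x) = RN_deriv Q ?\<nu> x"
    by (intro Q.RN_deriv_unique) auto
  hence RN: "AE x in Q. enn2real (RN_deriv Q ?\<nu> x) = f x"
    by eventually_elim (metis enn2real_ennreal f)
  define A where "A = (\<integral>\<^sup>+x. ennreal (f x * ln (f x)) \<partial>Q)"
  define B where "B = (\<integral>\<^sup>+x. ennreal (- (f x * ln (f x))) \<partial>Q)"
  define K where "K = (\<integral>\<^sup>+x. ennreal (kl_div (f x) 1) \<partial>Q)"
  have "D_KL ?\<nu> Q = enn2ereal A - enn2ereal B"
    unfolding D_KL_def A_def B_def Let_def using absolutely_continuousI_density[of f Q] RN
    by (auto intro!: arg_cong2[where f="\<lambda>a b. enn2ereal a - enn2ereal b"] nn_integral_cong_AE)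
  moreover have "A = K + B"
  proof -
    have "(\<integral>\<^sup>+x. ennreal (f x) \<partial>Q) = emeasure ?\<nu> (space ?\<nu>)"
      by (simp add: emeasure_density)
    hence int_f: "(\<integral>\<^sup>+x. ennreal (f x) \<partial>Q) = 1" using prob_space.emeasure_space_1[OF \<nu>] by simp
    have "A + 1 = (\<integral>\<^sup>+x. ennreal (f x * ln (f x)) + 1 \<partial>Q)"
      unfolding A_def by (simp add: nn_integral_add Q.emeasure_space_1)
    also have "\<dots> = (\<integral>\<^sup>+x. ennreal (kl_div (f x) 1) + ennreal (f x) + ennreal (- (f x * ln (f x))) \<partial>Q)"
      by (intro nn_integral_cong ennreal_mult_ln_parts f)
    also have "\<dots> = K + B + 1"
      unfolding K_def B_def int_f[symmetric] by (simp add: nn_integral_add add_ac)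
    finally show ?thesis by (simp add: ennreal_add_left_cancel add.commute)
  qed
  moreover have "B \<noteq> \<top>"
  proof -
    have "B \<le> (\<integral>\<^sup>+x. 1 \<partial>Q)"
      unfolding B_def by (intro nn_integral_mono) (simp add: mult_ln_ge_minus_one f)
    thus ?thesis by (auto simp: Q.emeasure_space_1 top_unique)
  qed
  ultimately show ?thesis by (simp add: K_def enn2ereal_add_diff_cancel)
qed

lemma D_KL_self: "prob_space P \<Longrightarrow> D_KL P P = 0"
  using D_KL_density_eq[of P "\<lambda>_. 1"] by (simp add: density_1 kl_div_def zero_ennreal.rep_eq)

lemma density_enn2real_RN_deriv:
  assumes "prob_space Q" "prob_space \<nu>" "sets \<nu> = sets Q" "absolutely_continuous Q \<nu>"
  shows "density Q (\<lambda>x. ennreal (enn2real (RN_deriv Q \<nu> x))) = \<nu>"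
proof -
  interpret Q: prob_space Q by fact
  have "AE x in Q. RN_deriv Q \<nu> x \<noteq> \<infinity>"
    using assms by (intro Q.RN_deriv_finite) (auto simp: prob_space_imp_sigma_finite)
  hence "density Q (\<lambda>x. ennreal (enn2real (RN_deriv Q \<nu> x))) = density Q (RN_deriv Q \<nu>)"
    by (intro density_cong) (auto simp: ennreal_enn2real_if)
  also have "\<dots> = \<nu>" using assms by (intro Q.density_RN_deriv) auto
  finally show ?thesis .
qed

lemma D_KL_finiteE:
  assumes "prob_space P" "prob_space \<nu>" "sets \<nu> = sets P" "D_KL \<nu> P \<noteq> \<infinity>"
  obtains h where "h \<in> borel_measurable P" "\<And>x. 0 \<le> (h x :: real)" "density P h = \<nu>"
proof
  show "density P (\<lambda>x. ennreal (enn2real (RN_deriv P \<nu> x))) = \<nu>"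
    using assms D_KL_not_absolutely_continuous by (intro density_enn2real_RN_deriv) auto
qed auto

lemma D_KL_density_le:
  assumes [measurable]: "g \<in> borel_measurable P" "h \<in> borel_measurable P"
    and g: "\<And>x. 0 \<le> g x" and h: "\<And>x. 0 \<le> h x"
    and prob_g: "prob_space (density P g)" and prob_h: "prob_space (density P h)"
  shows "D_KL (density P g) (density P h) \<le> enn2ereal (\<integral>\<^sup>+x. kl_div_ennreal (g x) (h x) \<partial>P)"
proof (cases "(\<integral>\<^sup>+x. kl_div_ennreal (g x) (h x) \<partial>P) = \<top>")
  case False
  have "AE x in P. kl_div_ennreal (g x) (h x) \<noteq> \<infinity>"
    by (rule nn_integral_PInf_AE) (use False in auto)
  hence supp: "AE x in P. h x = 0 \<longrightarrow> g x = 0"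
    by eventually_elim (use g in \<open>auto simp: kl_div_ennreal_def less_le infinity_ennreal_def split: if_splits\<close>)
  define r where "r x = (if 0 < h x then g x / h x else 0)" for x
  have [measurable]: "r \<in> borel_measurable P" unfolding r_def by measurable
  have r: "0 \<le> r x" for x using g h by (simp add: r_def)
  have "density (density P h) r = density P (\<lambda>x. ennreal (h x) * ennreal (r x))"
    by (intro density_density_eq) auto
  also have "\<dots> = density P g"
  proof (rule density_cong)
    show "AE x in P. ennreal (h x) * ennreal (r x) = ennreal (g x)"
      using supp by eventually_elim (auto simp: r_def g h less_le simp flip: ennreal_mult)
  qed auto
  finally have g_eq: "density (density P h) r = density P g" .
  have "D_KL (density P g) (density P h) = enn2ereal (\<integral>\<^sup>+x. ennreal (kl_div (r x) 1) \<partial>density P h)"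
    unfolding g_eq[symmetric] using prob_g g_eq r by (intro D_KL_density_eq prob_h) auto
  also have "(\<integral>\<^sup>+x. ennreal (kl_div (r x) 1) \<partial>density P h) = (\<integral>\<^sup>+x. ennreal (h x * kl_div (r x) 1) \<partial>P)"
    by (simp add: nn_integral_density h kl_div_one_nonneg r flip: ennreal_mult)
  also have "\<dots> \<le> (\<integral>\<^sup>+x. kl_div_ennreal (g x) (h x) \<partial>P)"
    by (intro nn_integral_mono)
      (auto simp: r_def kl_div_scale kl_div_ennreal_def less_le h)
  finally show ?thesis by (simp add: less_eq_ennreal.rep_eq)
qed simp

text \<open>The functional \<open>\<F>\<close> with a fixed reference measure \<open>P\<close> in place of the product of the
  marginals of \<open>\<nu>\<close>; the two agree on couplings.\<close>
definition ent_functional :: "('b \<Rightarrow> real) \<Rightarrow> 'b measure \<Rightarrow> 'b measure \<Rightarrow> ereal" where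
  "ent_functional c P \<nu> = enn2ereal (\<integral>\<^sup>+x. ennreal (c x) \<partial>\<nu>) + D_KL \<nu> P"

definition ent_cost :: "('b \<Rightarrow> real) \<Rightarrow> 'b measure \<Rightarrow> ('b \<Rightarrow> real) \<Rightarrow> ennreal" where
  "ent_cost c P f = (\<integral>\<^sup>+x. ennreal (f x * c x + kl_div (f x) 1) \<partial>P)"

lemma ent_functional_density:
  assumes "prob_space P" and [measurable]: "f \<in> borel_measurable P" "c \<in> borel_measurable P"
    and f: "\<And>x. 0 \<le> f x" and c: "\<And>x. x \<in> space P \<Longrightarrow> 0 \<le> c x"
    and "prob_space (density P f)"
  shows "ent_functional c P (density P f) = enn2ereal (ent_cost c P f)"
proof -
  have "(\<integral>\<^sup>+x. ennreal (c x) \<partial>density P f) + (\<integral>\<^sup>+x. ennreal (kl_div (f x) 1) \<partial>P) =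
      (\<integral>\<^sup>+x. ennreal (f x) * ennreal (c x) + ennreal (kl_div (f x) 1) \<partial>P)"
    by (simp add: nn_integral_density nn_integral_add)
  also have "\<dots> = ent_cost c P f"
    unfolding ent_cost_def using f c
    by (intro nn_integral_cong) (simp add: kl_div_one_nonneg ennreal_plus ennreal_mult)
  finally have "enn2ereal (\<integral>\<^sup>+x. ennreal (c x) \<partial>density P f) +
      enn2ereal (\<integral>\<^sup>+x. ennreal (kl_div (f x) 1) \<partial>P) = enn2ereal (ent_cost c P f)"
    by (simp flip: plus_ennreal.rep_eq)
  thus ?thesis using assms by (simp add: ent_functional_def D_KL_density_eq)
qed

lemma ent_cost_convex_comb:
  assumes [measurable]: "h \<in> borel_measurable P" "g \<in> borel_measurable P" "c \<in> borel_measurable P"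
    and h: "\<And>x. 0 \<le> h x" and g: "\<And>x. 0 \<le> g x" and c: "\<And>x. x \<in> space P \<Longrightarrow> 0 \<le> c x"
    and t: "0 < t" "t < 1"
  defines "m \<equiv> \<lambda>x. (1 - t) * h x + t * g x"
  shows "ennreal (1 - t) * ent_cost c P h + ennreal t * ent_cost c P g =
    ent_cost c P m + ennreal (1 - t) * (\<integral>\<^sup>+x. ennreal (kl_div (h x) (m x)) \<partial>P)
      + ennreal t * (\<integral>\<^sup>+x. ennreal (kl_div (g x) (m x)) \<partial>P)"
proof -
  have "ennreal (1 - t) * ent_cost c P h + ennreal t * ent_cost c P g =
      (\<integral>\<^sup>+x. ennreal (1 - t) * ennreal (h x * c x + kl_div (h x) 1)
        + ennreal t * ennreal (g x * c x + kl_div (g x) 1) \<partial>P)"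
    by (simp add: ent_cost_def nn_integral_add nn_integral_cmult)
  also have "\<dots> = (\<integral>\<^sup>+x. ennreal (m x * c x + kl_div (m x) 1)
      + ennreal (1 - t) * ennreal (kl_div (h x) (m x)) + ennreal t * ennreal (kl_div (g x) (m x)) \<partial>P)"
    by (intro nn_integral_cong) (simp add: m_def kl_div_convex_comb_cost h g c t)
  also have "\<dots> = ent_cost c P m + ennreal (1 - t) * (\<integral>\<^sup>+x. ennreal (kl_div (h x) (m x)) \<partial>P)
      + ennreal t * (\<integral>\<^sup>+x. ennreal (kl_div (g x) (m x)) \<partial>P)"
    by (simp add: ent_cost_def m_def nn_integral_add nn_integral_cmult)
  finally show ?thesis .
qed

lemma ent_cost_variational_inequality:
  assumes [measurable]: "h \<in> borel_measurable P" "g \<in> borel_measurable P" "c \<in> borel_measurable P"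
    and h: "\<And>x. 0 \<le> h x" and g: "\<And>x. 0 \<le> g x" and c: "\<And>x. x \<in> space P \<Longrightarrow> 0 \<le> c x"
    and opt: "\<And>t. 0 < t \<Longrightarrow> t < 1 \<Longrightarrow> ent_cost c P h \<le> ent_cost c P (\<lambda>x. (1 - t) * h x + t * g x)"
    and fin: "ent_cost c P h \<noteq> \<top>"
  shows "(\<integral>\<^sup>+x. kl_div_ennreal (g x) (h x) \<partial>P) \<le> ent_cost c P g - ent_cost c P h"
proof -
  have bound: "(\<integral>\<^sup>+x. ennreal (kl_div (g x) ((1 - t) * h x + t * g x)) \<partial>P)
      \<le> ent_cost c P g - ent_cost c P h" if t: "0 < t" "t < 1" for t
    by (rule ennreal_convex_comb_cancel[OF fin opt[OF t] t ent_cost_convex_comb[OF assms(1-6) t]])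
  define s where "s n = inverse (2 + real n)" for n
  have s: "0 < s n" "s n < 1" for n by (auto simp: s_def inverse_less_1_iff)
  have "s \<longlonglongrightarrow> 0" unfolding s_def
    by (intro tendsto_inverse_0_at_top filterlim_tendsto_add_at_top[OF tendsto_const]
        filterlim_real_sequentially)
  hence "(\<integral>\<^sup>+x. kl_div_ennreal (g x) (h x) \<partial>P) =
      (\<integral>\<^sup>+x. liminf (\<lambda>n. ennreal (kl_div (g x) ((1 - s n) * h x + s n * g x))) \<partial>P)"
    by (intro nn_integral_cong lim_imp_Liminf[symmetric] tendsto_kl_div_convex_comb g h s) simp
  also have "\<dots> \<le> liminf (\<lambda>n. \<integral>\<^sup>+x. ennreal (kl_div (g x) ((1 - s n) * h x + s n * g x)) \<partial>P)"
    by (intro nn_integral_liminf) measurable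
  also have "\<dots> \<le> ent_cost c P g - ent_cost c P h"
    by (intro order_trans[OF Liminf_le_Limsup Limsup_bounded] always_eventually allI bound s) simp
  finally show ?thesis .
qed

lemma ent_functional_variational_inequality:
  assumes P: "prob_space P"
    and K: "\<And>\<nu>. \<nu> \<in> K \<Longrightarrow> prob_space \<nu> \<and> sets \<nu> = sets P"
    and K_convex: "\<And>f g t. f \<in> borel_measurable P \<Longrightarrow> g \<in> borel_measurable P \<Longrightarrow>
        density P f \<in> K \<Longrightarrow> density P g \<in> K \<Longrightarrow> 0 < t \<Longrightarrow> t < 1 \<Longrightarrow>
        density P (\<lambda>x. ennreal (1 - t) * f x + ennreal t * g x) \<in> K"
    and \<pi>\<^sub>0: "\<pi>\<^sub>0 \<in> K" and \<pi>: "\<pi> \<in> K"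
    and opt: "\<And>\<nu>. \<nu> \<in> K \<Longrightarrow> ent_functional c P \<pi>\<^sub>0 \<le> ent_functional c P \<nu>"
    and fin: "ent_functional c P \<pi>\<^sub>0 \<noteq> \<infinity>"
    and [measurable]: "c \<in> borel_measurable P" and c: "\<And>x. x \<in> space P \<Longrightarrow> 0 \<le> c x"
  shows "D_KL \<pi> \<pi>\<^sub>0 \<le> ent_functional c P \<pi> - ent_functional c P \<pi>\<^sub>0"
proof (cases "ent_functional c P \<pi> = \<infinity>")
  case False
  have "D_KL \<nu> P \<noteq> \<infinity>" if "ent_functional c P \<nu> \<noteq> \<infinity>" for \<nu>
    using that by (auto simp: ent_functional_def)
  then obtain h g where [measurable]: "h \<in> borel_measurable P" "g \<in> borel_measurable P"
    and h: "\<And>x. 0 \<le> (h x :: real)" "density P h = \<pi>\<^sub>0"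
    and g: "\<And>x. 0 \<le> (g x :: real)" "density P g = \<pi>"
    using D_KL_finiteE[OF P] K[OF \<pi>\<^sub>0] K[OF \<pi>] fin False by metis
  have ent: "ent_functional c P (density P f) = enn2ereal (ent_cost c P f)"
    if [measurable]: "f \<in> borel_measurable P" and "\<And>x. 0 \<le> f x" "density P f \<in> K" for f
    using that K by (intro ent_functional_density P c) auto
  have cost_h: "ent_cost c P h \<le> ent_cost c P g" and fin_h: "ent_cost c P h \<noteq> \<top>"
    using opt[OF \<pi>] fin ent[of h] ent[of g] h g \<pi> \<pi>\<^sub>0 by (auto simp: less_eq_ennreal.rep_eq)
  have "ent_cost c P h \<le> ent_cost c P (\<lambda>x. (1 - t) * h x + t * g x)" if t: "0 < t" "t < 1" for t
  proof -
    have mix: "density P (\<lambda>x. (1 - t) * h x + t * g x) \<in> K"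
      using K_convex[of h g t] t h g \<pi> \<pi>\<^sub>0 by (simp add: ennreal_plus ennreal_mult)
    thus ?thesis
      using opt[OF mix] ent[OF _ _ mix] ent[of h] h g t \<pi>\<^sub>0 by (simp add: less_eq_ennreal.rep_eq)
  qed
  hence "(\<integral>\<^sup>+x. kl_div_ennreal (g x) (h x) \<partial>P) \<le> ent_cost c P g - ent_cost c P h"
    by (intro ent_cost_variational_inequality h g c fin_h) auto
  hence "enn2ereal (\<integral>\<^sup>+x. kl_div_ennreal (g x) (h x) \<partial>P) \<le> enn2ereal (ent_cost c P g - ent_cost c P h)"
    by (simp add: less_eq_ennreal.rep_eq)
  moreover have "D_KL \<pi> \<pi>\<^sub>0 \<le> enn2ereal (\<integral>\<^sup>+x. kl_div_ennreal (g x) (h x) \<partial>P)"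
    using D_KL_density_le[of g P h] K[OF \<pi>] K[OF \<pi>\<^sub>0] h g by simp
  ultimately show ?thesis
    using ent[of h] ent[of g] h g \<pi> \<pi>\<^sub>0 cost_h by (simp add: enn2ereal_minus)
qed (use fin in simp)

lemma sets_prod_space:
  assumes "\<And>i. i \<in> {1..N} \<Longrightarrow> sets (\<mu> i) = sets (borel_of (X i))"
  shows "sets (prod_space N X) = sets (PiM {1..N} \<mu>)"
  unfolding prod_space_def using assms by (intro sets_PiM_cong) auto

lemma emeasure_marginal:
  assumes sets_\<mu>: "\<And>i. i \<in> {1..N} \<Longrightarrow> sets (\<mu> i) = sets (borel_of (X i))"
    and sets_\<nu>: "sets \<nu> = sets (PiM {1..N} \<mu>)" and i: "i \<in> {1..N}" and A: "A \<in> sets (borel_of (X i))"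
  shows "emeasure (marginal X \<nu> i) A = emeasure \<nu> ((\<lambda>x. x i) -` A \<inter> space (PiM {1..N} \<mu>))"
proof -
  have "(\<lambda>x. x i) \<in> measurable (PiM {1..N} \<mu>) (\<mu> i)" using i by (rule measurable_component_singleton)
  hence "(\<lambda>x. x i) \<in> measurable \<nu> (borel_of (X i))"
    using measurable_cong_sets[OF sets_\<nu>[symmetric] sets_\<mu>[OF i]] by simp
  thus ?thesis unfolding marginal_def using A sets_eq_imp_space_eq[OF sets_\<nu>]
    by (simp add: emeasure_distr)
qed

lemma PiM_in_couplings:
  assumes prob: "\<And>i. i \<in> {1..N} \<Longrightarrow> prob_space (\<mu> i)"
    and sets_\<mu>: "\<And>i. i \<in> {1..N} \<Longrightarrow> sets (\<mu> i) = sets (borel_of (X i))"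
  shows "PiM {1..N} \<mu> \<in> couplings N X \<mu>"
proof -
  have "marginal X (PiM {1..N} \<mu>) i = \<mu> i" if i: "i \<in> {1..N}" for i
  proof -
    have "marginal X (PiM {1..N} \<mu>) i = distr (PiM {1..N} \<mu>) (\<mu> i) (\<lambda>x. x i)"
      unfolding marginal_def by (rule distr_cong) (auto simp: sets_\<mu>[OF i])
    also have "\<dots> = \<mu> i" by (rule distr_PiM_component[OF prob i])
    finally show ?thesis .
  qed
  moreover have "prob_space (PiM {1..N} \<mu>)" using prob by (rule prob_space_PiM)
  ultimately show ?thesis using sets_prod_space[OF sets_\<mu>] by (auto simp: couplings_def)
qed

lemma couplings_density_convex_comb:
  assumes sets_\<mu>: "\<And>i. i \<in> {1..N} \<Longrightarrow> sets (\<mu> i) = sets (borel_of (X i))"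
    and fm: "f \<in> borel_measurable (PiM {1..N} \<mu>)" and gm: "g \<in> borel_measurable (PiM {1..N} \<mu>)"
    and f: "density (PiM {1..N} \<mu>) f \<in> couplings N X \<mu>"
    and g: "density (PiM {1..N} \<mu>) g \<in> couplings N X \<mu>"
    and t: "0 < t" "t < 1"
  shows "density (PiM {1..N} \<mu>) (\<lambda>x. ennreal (1 - t) * f x + ennreal t * g x) \<in> couplings N X \<mu>"
proof -
  let ?P = "PiM {1..N} \<mu>"
  let ?m = "density ?P (\<lambda>x. ennreal (1 - t) * f x + ennreal t * g x)"
  have em: "emeasure ?m S = ennreal (1 - t) * emeasure (density ?P f) S + ennreal t * emeasure (density ?P g) S"
    if "S \<in> sets ?P" for S
    using that fm gm by (simp add: emeasure_density nn_integral_add nn_integral_cmult distrib_right mult.assoc)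
  have "emeasure (density ?P f) (space ?P) = 1" "emeasure (density ?P g) (space ?P) = 1"
    using f g prob_space.emeasure_space_1 by (fastforce simp: couplings_def)+
  hence "prob_space ?m"
    using em[of "space ?P"] t ennreal_convex_comb_same[of t 1] by (intro prob_spaceI) simp
  moreover have "marginal X ?m i = \<mu> i" if i: "i \<in> {1..N}" for i
  proof (rule measure_eqI)
    fix A assume "A \<in> sets (marginal X ?m i)"
    hence A: "A \<in> sets (borel_of (X i))" by (simp add: marginal_def)
    let ?S = "(\<lambda>x. x i) -` A \<inter> space ?P"
    have S: "?S \<in> sets ?P"
      using measurable_component_singleton[OF i, of \<mu>] A sets_\<mu>[OF i] by (simp add: measurable_sets)
    have marg: "emeasure (marginal X (density ?P k) i) A = emeasure (density ?P k) ?S" for k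
      using emeasure_marginal[of N \<mu> X "density ?P k", OF sets_\<mu> _ i A] by simp
    have "marginal X (density ?P f) i = \<mu> i" "marginal X (density ?P g) i = \<mu> i"
      using f g i by (auto simp: couplings_def)
    hence "emeasure (density ?P f) ?S = emeasure (\<mu> i) A" "emeasure (density ?P g) ?S = emeasure (\<mu> i) A"
      using marg by metis+
    thus "emeasure (marginal X ?m i) A = emeasure (\<mu> i) A"
      using marg em[OF S] t ennreal_convex_comb_same[of t "emeasure (\<mu> i) A"] by simp
  qed (simp add: marginal_def sets_\<mu>[OF i])
  moreover have "sets ?m = sets (prod_space N X)" using sets_prod_space[OF sets_\<mu>] by simp
  ultimately show ?thesis by (simp add: couplings_def)
qed

lemma F_ent_coupling:
  assumes "\<pi> \<in> couplings N X \<mu>"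
  shows "F_ent N X c \<pi> = ent_functional c (PiM {1..N} \<mu>) \<pi>"
proof -
  have "PiM {1..N} (marginal X \<pi>) = PiM {1..N} \<mu>"
    using assms by (intro PiM_cong) (auto simp: couplings_def)
  thus ?thesis by (simp add: F_ent_def ent_functional_def)
qed

theorem mainTheorem11:
  fixes N :: nat
    and X :: "nat \<Rightarrow> 'a topology"
    and \<mu> :: "nat \<Rightarrow> 'a measure"
    and c :: "(nat \<Rightarrow> 'a) \<Rightarrow> real"
    and \<pi>star :: "(nat \<Rightarrow> 'a) measure"
  assumes polish: "\<And>i. i \<in> {1..N} \<Longrightarrow> Polish_space (X i)"
    and prob: "\<And>i. i \<in> {1..N} \<Longrightarrow> prob_space (\<mu> i)"
    and sets_mu: "\<And>i. i \<in> {1..N} \<Longrightarrow> sets (\<mu> i) = sets (borel_of (X i))"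
    and c_meas: "c \<in> borel_measurable (prod_space N X)"
    and c_nonneg: "\<And>x. x \<in> space (prod_space N X) \<Longrightarrow> c x \<ge> 0"
    and c_int: "integrable (PiM {1..N} \<mu>) c"
    and opt_coupling: "\<pi>star \<in> couplings N X \<mu>"
    and opt: "enn2ereal (\<integral>\<^sup>+ x. ennreal (c x) \<partial>\<pi>star) + D_KL \<pi>star (PiM {1..N} \<mu>) = S_ent N X \<mu> c"
  shows "\<forall>\<pi>\<in>couplings N X \<mu>. D_KL \<pi> \<pi>star \<le> F_ent N X c \<pi> - F_ent N X c \<pi>star"
proof
  fix \<pi> assume \<pi>: "\<pi> \<in> couplings N X \<mu>"
  define P where "P = PiM {1..N} \<mu>"
  have P: "prob_space P" unfolding P_def using prob by (rule prob_space_PiM)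
  have sets_P: "sets (prod_space N X) = sets P" unfolding P_def by (rule sets_prod_space[OF sets_mu])
  have min: "ent_functional c P \<pi>star \<le> ent_functional c P \<nu>" if "\<nu> \<in> couplings N X \<mu>" for \<nu>
    using opt that by (auto simp: ent_functional_def S_ent_def P_def intro: INF_lower)
  have "ent_functional c P P = enn2ereal (\<integral>\<^sup>+x. ennreal (c x) \<partial>P)"
    by (simp add: ent_functional_def D_KL_self[OF P])
  hence "ent_functional c P \<pi>star \<noteq> \<infinity>"
    using min[OF PiM_in_couplings[OF prob sets_mu]] c_int by (auto simp: P_def top_unique)
  moreover have "\<nu> \<in> couplings N X \<mu> \<Longrightarrow> prob_space \<nu> \<and> sets \<nu> = sets P" for \<nu>
    using sets_P by (simp add: couplings_def)
  moreover have "c \<in> borel_measurable P" "\<And>x. x \<in> space P \<Longrightarrow> 0 \<le> c x"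
    using c_meas c_nonneg sets_eq_imp_space_eq[OF sets_P] measurable_cong_sets[OF sets_P refl] by auto
  ultimately have "D_KL \<pi> \<pi>star \<le> ent_functional c P \<pi> - ent_functional c P \<pi>star"
    using couplings_density_convex_comb[OF sets_mu]
    by (intro ent_functional_variational_inequality[OF P _ _ opt_coupling \<pi> min]) (auto simp: P_def)
  thus "D_KL \<pi> \<pi>star \<le> F_ent N X c \<pi> - F_ent N X c \<pi>star"
    using \<pi> opt_coupling by (simp add: F_ent_coupling P_def)
qed

end
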